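(* Let $\alpha\in(0,1)$, $\gamma>0$, $a>0$, $b\in\mathbb R\setminus\{0\}$, and assume $\eta=0$. Then the operator $-\mathcal A$ is not invertible; consequently $0\in\sigma(\mathcal A)$.
   Context: Let $\mu(\xi)=|\xi|^{\frac{2\alpha-1}{2}}$ and $\kappa(\alpha)=\frac{\sin(\alpha\pi)}{\pi}$. Let $H^1_L(0,1)=\{u\in H^1(0,1):u(0)=0\}$. $\mathcal H=H^1_L(0,1)\times L^2(0,1)\times H^1_0(0,1)\times L^2(0,1)\times L^2(\mathbb R)$ with inner product $\langle(u,v,y,z,\omega),(\tilde u,\tilde v,\tilde y,\tilde z,\tilde\omega)\rangle_{\mathcal H}=\int_0^1(v\bar{\tilde v}+u_x\bar{\tilde u}_x+z\bar{\tilde z}+a y_x\bar{\tilde y}_x)dx+\gamma\kappa(\alpha)\int_{\mathbb R}\omega\bar{\tilde\omega}\,d\xi$. $D(\mathcal A)$ is the set of $(u,v,y,z,\omega)\in\mathcal H$ with $u\in H^2(0,1)\cap H^1_L(0,1)$, $y\in H^2(0,1)\cap H^1_0(0,1)$, $v\in H^1_L(0,1)$, $z\in H^1_0(0,1)$, $-(\xi^2+\eta)\omega+v(1)\mu(\xi)\in L^2(\mathbb R)$, $|\xi|\omega\in L^2(\mathbb R)$, $u_x(1)+\gamma\kappa(\alpha)\int_{\mathbb R}\mu(\xi)\omega(\xi)d\xi=0$, and $\mathcal A(u,v,y,z,\omega)=(v,\,u_{xx}-bz,\,z,\,ay_{xx}+bv,\,-(\xi^2+\eta)\omega+v(1)\mu(\xi))$.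 *)

theory Defs
  imports "HOL-Analysis.Analysis"
begin

text \<open>Functions are complex valued; elements of L2 / H1 are represented by
  (pointwise) functions, H1 functions by their continuous representative on [0,1].\<close>

type_synonym cfun = "real \<Rightarrow> complex"
type_synonym state = "cfun \<times> cfun \<times> cfun \<times> cfun \<times> cfun"

definition mu :: "real \<Rightarrow> real \<Rightarrow> real" where
  "mu \<alpha> \<xi> = \<bar>\<xi>\<bar> powr ((2 * \<alpha> - 1) / 2)"

definition kappa :: "real \<Rightarrow> real" where
  "kappa \<alpha> = sin (\<alpha> * pi) / pi"

definition L2 :: "real set \<Rightarrow> cfun \<Rightarrow> bool" where
  "L2 S f \<longleftrightarrow> set_borel_measurable lborel S f \<and>
     set_integrable lborel S (\<lambda>x. (cmod (f x))\<^sup>2)"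

definition is_wderiv :: "cfun \<Rightarrow> cfun \<Rightarrow> bool" where
  "is_wderiv u g \<longleftrightarrow> L2 {0..1} g \<and>
     (\<forall>x\<in>{0..1}. u x = u 0 + set_lebesgue_integral lborel {0..x} g)"

definition H1 :: "cfun \<Rightarrow> bool" where
  "H1 u \<longleftrightarrow> (\<exists>g. is_wderiv u g)"

definition wd :: "cfun \<Rightarrow> cfun" where
  "wd u = (SOME g. is_wderiv u g)"

definition H1L :: "cfun \<Rightarrow> bool" where
  "H1L u \<longleftrightarrow> H1 u \<and> u 0 = 0"

definition H10 :: "cfun \<Rightarrow> bool" where
  "H10 u \<longleftrightarrow> H1 u \<and> u 0 = 0 \<and> u 1 = 0"

definition dx :: "cfun \<Rightarrow> cfun" where
  "dx u x = vector_derivative u (at x within {0..1})"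

definition H2 :: "cfun \<Rightarrow> bool" where
  "H2 u \<longleftrightarrow> H1 u \<and> (\<exists>g. H1 g \<and>
     (\<forall>x\<in>{0..1}. (u has_vector_derivative g x) (at x within {0..1})))"

definition dxx :: "cfun \<Rightarrow> cfun" where
  "dxx u = wd (dx u)"

definition inH :: "state \<Rightarrow> bool" where
  "inH U = (case U of (u, v, y, z, \<omega>) \<Rightarrow>
     H1L u \<and> L2 {0..1} v \<and> H10 y \<and> L2 {0..1} z \<and> L2 UNIV \<omega>)"

definition Hnormsq :: "real \<Rightarrow> real \<Rightarrow> real \<Rightarrow> state \<Rightarrow> real" where
  "Hnormsq a \<gamma> \<alpha> U = (case U of (u, v, y, z, \<omega>) \<Rightarrow>
     set_lebesgue_integral lborel {0..1}
        (\<lambda>x. (cmod (v x))\<^sup>2 + (cmod (wd u x))\<^sup>2 + (cmod (z x))\<^sup>2 + a * (cmod (wd y x))\<^sup>2)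
     + \<gamma> * kappa \<alpha> * integral\<^sup>L lborel (\<lambda>\<xi>. (cmod (\<omega> \<xi>))\<^sup>2))"

definition Hnorm :: "real \<Rightarrow> real \<Rightarrow> real \<Rightarrow> state \<Rightarrow> real" where
  "Hnorm a \<gamma> \<alpha> U = sqrt (Hnormsq a \<gamma> \<alpha> U)"

definition st_diff :: "state \<Rightarrow> state \<Rightarrow> state" where
  "st_diff U V = (case U of (u, v, y, z, \<omega>) \<Rightarrow> case V of (u', v', y', z', \<omega>') \<Rightarrow>
     (\<lambda>x. u x - u' x, \<lambda>x. v x - v' x, \<lambda>x. y x - y' x, \<lambda>x. z x - z' x, \<lambda>x. \<omega> x - \<omega>' x))"

definition st_scale :: "complex \<Rightarrow> state \<Rightarrow> state" where
  "st_scale c U = (case U of (u, v, y, z, \<omega>) \<Rightarrow>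
     (\<lambda>x. c * u x, \<lambda>x. c * v x, \<lambda>x. c * y x, \<lambda>x. c * z x, \<lambda>x. c * \<omega> x))"

text \<open>equality as elements of H (i.e. up to null sets)\<close>
definition Heq :: "real \<Rightarrow> real \<Rightarrow> real \<Rightarrow> state \<Rightarrow> state \<Rightarrow> bool" where
  "Heq a \<gamma> \<alpha> U V \<longleftrightarrow> Hnormsq a \<gamma> \<alpha> (st_diff U V) = 0"

definition domA :: "real \<Rightarrow> real \<Rightarrow> real \<Rightarrow> state \<Rightarrow> bool" where
  "domA \<gamma> \<alpha> \<eta> U = (case U of (u, v, y, z, \<omega>) \<Rightarrow>
     inH U \<and> H2 u \<and> H1L u \<and> H2 y \<and> H10 y \<and> H1L v \<and> H10 z \<and>
     L2 UNIV (\<lambda>\<xi>. - complex_of_real (\<xi>\<^sup>2 + \<eta>) * \<omega> \<xi> + v 1 * complex_of_real (mu \<alpha> \<xi>)) \<and>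
     L2 UNIV (\<lambda>\<xi>. complex_of_real \<bar>\<xi>\<bar> * \<omega> \<xi>) \<and>
     dx u 1 + complex_of_real (\<gamma> * kappa \<alpha>) *
        integral\<^sup>L lborel (\<lambda>\<xi>. complex_of_real (mu \<alpha> \<xi>) * \<omega> \<xi>) = 0)"

definition opA :: "real \<Rightarrow> real \<Rightarrow> real \<Rightarrow> real \<Rightarrow> state \<Rightarrow> state" where
  "opA a b \<alpha> \<eta> U = (case U of (u, v, y, z, \<omega>) \<Rightarrow>
     (v,
      \<lambda>x. dxx u x - complex_of_real b * z x,
      z,
      \<lambda>x. complex_of_real a * dxx y x + complex_of_real b * v x,
      \<lambda>\<xi>. - complex_of_real (\<xi>\<^sup>2 + \<eta>) * \<omega> \<xi> + v 1 * complex_of_real (mu \<alpha> \<xi>)))"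

definition invertible_op ::
  "real \<Rightarrow> real \<Rightarrow> real \<Rightarrow> (state \<Rightarrow> bool) \<Rightarrow> (state \<Rightarrow> state) \<Rightarrow> bool" where
  "invertible_op a \<gamma> \<alpha> D T \<longleftrightarrow> (\<exists>B.
     (\<forall>F. inH F \<longrightarrow> D (B F) \<and> Heq a \<gamma> \<alpha> (T (B F)) F) \<and>
     (\<forall>U. D U \<longrightarrow> Heq a \<gamma> \<alpha> (B (T U)) U) \<and>
     (\<forall>F G. inH F \<longrightarrow> inH G \<longrightarrow> Heq a \<gamma> \<alpha> F G \<longrightarrow> Heq a \<gamma> \<alpha> (B F) (B G)) \<and>
     (\<exists>C. \<forall>F. inH F \<longrightarrow> Hnorm a \<gamma> \<alpha> (B F) \<le> C * Hnorm a \<gamma> \<alpha> F))"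

definition spectrumA :: "real \<Rightarrow> real \<Rightarrow> real \<Rightarrow> real \<Rightarrow> real \<Rightarrow> complex set" where
  "spectrumA a b \<gamma> \<alpha> \<eta> = {c. \<not> invertible_op a \<gamma> \<alpha> (domA \<gamma> \<alpha> \<eta>)
       (\<lambda>U. st_diff (st_scale c U) (opA a b \<alpha> \<eta> U))}"

end

theory Submission
  imports Defs
begin

(* Apply -A U = F to F = (0, 0, 0, 0, s) with s the sign function of [-1, 1] (zero outside).
   For eta = 0 the last component forces xi^2 omega(xi) = v(1) mu(xi) + s(xi) almost everywhere.
   Since mu is even and s is odd, the odd part of omega is 1/xi^2 on (0, 1], which is not
   square integrable near 0. Hence F has no preimage in D(A), and -A is not onto H. *)

lemma norm_add_squared_le:
  fixes x y :: "'a :: real_normed_vector"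
  shows "(norm (x + y))\<^sup>2 \<le> 2 * (norm x)\<^sup>2 + 2 * (norm y)\<^sup>2"
proof -
  have "(norm (x + y))\<^sup>2 \<le> (norm x + norm y)\<^sup>2"
    by (simp add: norm_triangle_ineq power_mono)
  also have "\<dots> \<le> 2 * (norm x)\<^sup>2 + 2 * (norm y)\<^sup>2"
    using zero_le_power2[of "norm x - norm y"] by (simp add: power2_sum power2_diff)
  finally show ?thesis .
qed

lemma L2_add:
  assumes "L2 S f" "L2 S g"
  shows "L2 S (\<lambda>x. f x + g x)"
proof -
  have meas: "(\<lambda>x. indicator S x *\<^sub>R (f x + g x)) \<in> borel_measurable lborel"
    using assms unfolding L2_def set_borel_measurable_def by (simp add: scaleR_add_right borel_measurable_add)
  have "integrable lborel (\<lambda>x. indicator S x *\<^sub>R (cmod (f x + g x))\<^sup>2)"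
  proof (rule Bochner_Integration.integrable_bound)
    show "integrable lborel (\<lambda>x. 2 * (indicator S x *\<^sub>R (cmod (f x))\<^sup>2) + 2 * (indicator S x *\<^sub>R (cmod (g x))\<^sup>2))"
      using assms unfolding L2_def set_integrable_def by auto
    have "(\<lambda>x. (cmod (indicator S x *\<^sub>R (f x + g x)))\<^sup>2) \<in> borel_measurable lborel"
      using meas by measurable
    then show "(\<lambda>x. indicator S x *\<^sub>R (cmod (f x + g x))\<^sup>2) \<in> borel_measurable lborel"
      by (rule measurable_cong[THEN iffD1, rotated]) (simp add: indicator_def)
    show "AE x in lborel. norm (indicator S x *\<^sub>R (cmod (f x + g x))\<^sup>2)
        \<le> norm (2 * (indicator S x *\<^sub>R (cmod (f x))\<^sup>2) + 2 * (indicator S x *\<^sub>R (cmod (g x))\<^sup>2))"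
      using norm_add_squared_le[of "f _" "g _"] by (simp add: indicator_def)
  qed
  with meas show ?thesis unfolding L2_def set_borel_measurable_def set_integrable_def by simp
qed

lemma L2_uminus: "L2 S f \<Longrightarrow> L2 S (\<lambda>x. - f x)"
  unfolding L2_def set_borel_measurable_def set_integrable_def by simp

lemma AE_lborel_reflect:
  assumes "AE x in lborel. P x"
  shows "AE x in lborel. P (- x :: real)"
proof -
  from assms obtain N where N: "{x \<in> space lborel. \<not> P x} \<subseteq> N" "emeasure lborel N = 0" "N \<in> sets lborel"
    by (auto elim: AE_E)
  have "AE x in lborel. x \<notin> N"
    using N by (intro AE_not_in) auto
  then have "AE x in lborel. 0 + (-1) * x \<notin> N"
    by (intro AE_borel_affine) (use N in auto)
  then show ?thesis
    by eventually_elim (use N in auto)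
qed

lemma not_integrable_if_ge_square_near_0:
  fixes h :: "real \<Rightarrow> real"
  assumes nonneg: "\<And>x. 0 \<le> h x"
    and blowup: "\<And>n::nat. AE x in lborel. 0 < x \<and> x \<le> 1 / real n \<longrightarrow> (real n)\<^sup>2 \<le> h x"
  shows "\<not> integrable lborel h"
proof
  assume int: "integrable lborel h"
  have "real n \<le> integral\<^sup>L lborel h" for n :: nat
  proof -
    have "integrable lborel (\<lambda>x. (real n)\<^sup>2 * indicator {0<..1 / real n} x :: real)"
      by (intro integrable_mult_right integrable_real_indicator) auto
    then have "integral\<^sup>L lborel (\<lambda>x. (real n)\<^sup>2 * indicator {0<..1 / real n} x) \<le> integral\<^sup>L lborel h"
      using blowup[of n] nonneg
      by (intro integral_mono_AE int) (auto elim!: eventually_mono simp: indicator_def)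
    then show ?thesis
      by (cases "n = 0") (simp_all add: power2_eq_square)
  qed
  moreover obtain n :: nat where "integral\<^sup>L lborel h < real n"
    using reals_Archimedean2 by blast
  ultimately show False
    by (meson not_le)
qed

lemma inverse_square_gap_bound:
  fixes p q :: complex and x n :: real
  assumes gap: "complex_of_real (x\<^sup>2) * (p - q) = 2" and "0 < x" "x * n \<le> 1" "1 \<le> n"
  shows "n\<^sup>2 \<le> (cmod p)\<^sup>2 + (cmod q)\<^sup>2"
proof -
  define h where "h = (cmod p)\<^sup>2 + (cmod q)\<^sup>2"
  have "x\<^sup>2 * cmod (p - q) = 2"
    using arg_cong[OF gap, of cmod] by (simp add: norm_mult norm_power)
  then have "4 = (x\<^sup>2 * cmod (p - q))\<^sup>2"
    by simp
  also have "\<dots> = x ^ 4 * (cmod (p - q))\<^sup>2"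
    by (simp add: power_mult_distrib flip: power_mult)
  also have "\<dots> \<le> x ^ 4 * (2 * h)"
    using norm_add_squared_le[of p "- q"] by (intro mult_left_mono) (simp_all add: h_def)
  finally have "2 \<le> x ^ 4 * h"
    by (simp add: mult.commute)
  then have "2 * n ^ 4 \<le> (x ^ 4 * h) * n ^ 4"
    by (intro mult_right_mono) auto
  also have "\<dots> = (x * n) ^ 4 * h"
    by (simp add: power_mult_distrib)
  also have "\<dots> \<le> h"
    using assms(2-4) by (intro mult_left_le_one_le) (simp_all add: h_def power_le_one)
  finally have "2 * n ^ 4 \<le> h" .
  moreover have "n\<^sup>2 \<le> n ^ 4"
    using \<open>1 \<le> n\<close> by (intro power_increasing) auto
  moreover have "0 \<le> n ^ 4"
    using \<open>1 \<le> n\<close> by simp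
  ultimately show ?thesis
    unfolding h_def by linarith
qed

lemma inverse_square_odd_part_not_square_integrable:
  fixes \<omega> :: "real \<Rightarrow> complex"
  assumes odd_part: "AE \<xi> in lborel. 0 < \<xi> \<and> \<xi> \<le> 1 \<longrightarrow> complex_of_real (\<xi>\<^sup>2) * (\<omega> \<xi> - \<omega> (- \<xi>)) = 2"
  shows "\<not> integrable lborel (\<lambda>\<xi>. (cmod (\<omega> \<xi>))\<^sup>2)"
proof
  assume int: "integrable lborel (\<lambda>\<xi>. (cmod (\<omega> \<xi>))\<^sup>2)"
  then have "integrable lborel (\<lambda>\<xi>. (cmod (\<omega> (- \<xi>)))\<^sup>2)"
    using lborel_integrable_real_affine_iff[of "-1" "\<lambda>\<xi>. (cmod (\<omega> \<xi>))\<^sup>2" 0] by simp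
  with int have "integrable lborel (\<lambda>\<xi>. (cmod (\<omega> \<xi>))\<^sup>2 + (cmod (\<omega> (- \<xi>)))\<^sup>2)"
    by simp
  moreover have "AE \<xi> in lborel. 0 < \<xi> \<and> \<xi> \<le> 1 / real n \<longrightarrow>
      (real n)\<^sup>2 \<le> (cmod (\<omega> \<xi>))\<^sup>2 + (cmod (\<omega> (- \<xi>)))\<^sup>2" for n :: nat
    using odd_part
  proof eventually_elim
    case (elim \<xi>)
    show ?case
    proof (intro impI, elim conjE)
      assume "0 < \<xi>" "\<xi> \<le> 1 / real n"
      moreover from this have "1 \<le> real n"
        by (cases "n = 0") auto
      ultimately have "\<xi> * real n \<le> 1"
        by (simp add: pos_le_divide_eq)
      moreover have "\<xi> \<le> \<xi> * real n"
        using \<open>0 < \<xi>\<close> \<open>1 \<le> real n\<close> by (simp add: mult_le_cancel_left1)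
      ultimately have "\<xi> \<le> 1"
        by linarith
      with \<open>\<xi> * real n \<le> 1\<close> \<open>0 < \<xi>\<close> \<open>1 \<le> real n\<close> elim
      show "(real n)\<^sup>2 \<le> (cmod (\<omega> \<xi>))\<^sup>2 + (cmod (\<omega> (- \<xi>)))\<^sup>2"
        by (intro inverse_square_gap_bound) auto
    qed
  qed
  ultimately show False
    using not_integrable_if_ge_square_near_0[of "\<lambda>\<xi>. (cmod (\<omega> \<xi>))\<^sup>2 + (cmod (\<omega> (- \<xi>)))\<^sup>2"]
    by simp
qed

lemma kappa_pos: "0 < \<alpha> \<Longrightarrow> \<alpha> < 1 \<Longrightarrow> 0 < kappa \<alpha>"
  unfolding kappa_def by (intro divide_pos_pos sin_gt_zero) auto

lemma zero_in_spectrumA_iff: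
  "0 \<in> spectrumA a b \<gamma> \<alpha> \<eta> \<longleftrightarrow>
     \<not> invertible_op a \<gamma> \<alpha> (domA \<gamma> \<alpha> \<eta>) (\<lambda>U. st_scale (-1) (opA a b \<alpha> \<eta> U))"
proof -
  have "(\<lambda>U. st_diff (st_scale 0 U) (opA a b \<alpha> \<eta> U)) = (\<lambda>U. st_scale (-1) (opA a b \<alpha> \<eta> U))"
    by (auto simp: fun_eq_iff st_diff_def st_scale_def opA_def split: prod.splits)
  then show ?thesis
    unfolding spectrumA_def by simp
qed

lemma Heq_imp_AE_eq_last:
  assumes heq: "Heq a \<gamma> \<alpha> (u, v, y, z, \<omega>) (u', v', y', z', \<omega>')"
    and "0 \<le> a" "0 < \<gamma> * kappa \<alpha>" "L2 UNIV \<omega>" "L2 UNIV \<omega>'"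
  shows "AE \<xi> in lborel. \<omega> \<xi> = \<omega>' \<xi>"
proof -
  define I where "I = integral\<^sup>L lborel (\<lambda>\<xi>. (cmod (\<omega> \<xi> - \<omega>' \<xi>))\<^sup>2)"
  define S where "S = set_lebesgue_integral lborel {0..1} (\<lambda>x. (cmod (v x - v' x))\<^sup>2
    + (cmod (wd (\<lambda>x. u x - u' x) x))\<^sup>2 + (cmod (z x - z' x))\<^sup>2 + a * (cmod (wd (\<lambda>x. y x - y' x) x))\<^sup>2)"
  have "S + \<gamma> * kappa \<alpha> * I = 0"
    using heq by (simp add: Heq_def Hnormsq_def st_diff_def S_def I_def)
  moreover have "0 \<le> S"
    unfolding S_def set_lebesgue_integral_def using \<open>0 \<le> a\<close> by (intro integral_nonneg_AE) simp
  moreover have "0 \<le> I"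
    unfolding I_def by (intro integral_nonneg_AE) simp
  ultimately have "I = 0"
    using \<open>0 < \<gamma> * kappa \<alpha>\<close> by (auto simp: add_nonneg_eq_0_iff)
  moreover have "L2 UNIV (\<lambda>\<xi>. \<omega> \<xi> + - \<omega>' \<xi>)"
    using assms(4,5) by (intro L2_add L2_uminus)
  then have "integrable lborel (\<lambda>\<xi>. (cmod (\<omega> \<xi> - \<omega>' \<xi>))\<^sup>2)"
    by (simp add: L2_def set_integrable_def)
  ultimately have "AE \<xi> in lborel. (cmod (\<omega> \<xi> - \<omega>' \<xi>))\<^sup>2 = 0"
    unfolding I_def by (subst (asm) integral_nonneg_eq_0_iff_AE) auto
  then show ?thesis
    by eventually_elim simp
qed

definition odd_step :: cfun where
  "odd_step \<xi> = complex_of_real (indicator {0<..1} \<xi> - indicator {-1..<0} \<xi>)"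

lemma inH_odd_step: "inH (\<lambda>_. 0, \<lambda>_. 0, \<lambda>_. 0, \<lambda>_. 0, odd_step)"
proof -
  have L2_zero: "L2 {0..1} (\<lambda>_. 0)"
    by (simp add: L2_def set_borel_measurable_def set_integrable_def)
  then have "is_wderiv (\<lambda>_. 0) (\<lambda>_. 0)"
    by (simp add: is_wderiv_def)
  then have "H1L (\<lambda>_. 0)" "H10 (\<lambda>_. 0)"
    by (auto simp: H1L_def H10_def H1_def)
  moreover have "(cmod (odd_step \<xi>))\<^sup>2 = indicator {0<..1} \<xi> + indicator {-1..<0} \<xi>" for \<xi>
    by (auto simp: odd_step_def indicator_def)
  then have "L2 UNIV odd_step"
    unfolding L2_def set_borel_measurable_def set_integrable_def odd_step_def by auto
  ultimately show ?thesis
    using L2_zero by (simp add: inH_def)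
qed

lemma minus_opA_not_Heq_odd_step:
  assumes "0 \<le> a" "0 < \<gamma> * kappa \<alpha>" and dom: "domA \<gamma> \<alpha> 0 (u, v, y, z, \<omega>)"
  shows "\<not> Heq a \<gamma> \<alpha> (st_scale (-1) (opA a b \<alpha> 0 (u, v, y, z, \<omega>))) (\<lambda>_. 0, \<lambda>_. 0, \<lambda>_. 0, \<lambda>_. 0, odd_step)"
proof
  define w where "w \<xi> = - (- complex_of_real (\<xi>\<^sup>2 + 0) * \<omega> \<xi> + v 1 * complex_of_real (mu \<alpha> \<xi>))" for \<xi>
  have minus_opA: "st_scale (-1) (opA a b \<alpha> 0 (u, v, y, z, \<omega>)) =
      (\<lambda>x. - v x, \<lambda>x. - (dxx u x - b * z x), \<lambda>x. - z x, \<lambda>x. - (a * dxx y x + b * v x), w)"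
    by (simp add: st_scale_def opA_def w_def fun_eq_iff)
  assume "Heq a \<gamma> \<alpha> (st_scale (-1) (opA a b \<alpha> 0 (u, v, y, z, \<omega>))) (\<lambda>_. 0, \<lambda>_. 0, \<lambda>_. 0, \<lambda>_. 0, odd_step)"
  note heq = this[unfolded minus_opA]
  have "L2 UNIV \<omega>"
    "L2 UNIV (\<lambda>\<xi>. - complex_of_real (\<xi>\<^sup>2 + 0) * \<omega> \<xi> + v 1 * complex_of_real (mu \<alpha> \<xi>))"
    using dom by (simp_all add: domA_def inH_def)
  from this(2) have "L2 UNIV w"
    unfolding w_def by (rule L2_uminus)
  moreover have "L2 UNIV odd_step"
    using inH_odd_step by (simp add: inH_def)
  ultimately have "AE \<xi> in lborel. w \<xi> = odd_step \<xi>"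
    by (rule Heq_imp_AE_eq_last[OF heq assms(1,2)])
  then have eq: "AE \<xi> in lborel. complex_of_real (\<xi>\<^sup>2) * \<omega> \<xi> = v 1 * mu \<alpha> \<xi> + odd_step \<xi>"
    by eventually_elim (simp add: w_def algebra_simps)
  \<comment> \<open>subtract the reflected equation: mu is even, odd_step is odd\<close>
  have "AE \<xi> in lborel. 0 < \<xi> \<and> \<xi> \<le> 1 \<longrightarrow> complex_of_real (\<xi>\<^sup>2) * (\<omega> \<xi> - \<omega> (- \<xi>)) = 2"
    using eq AE_lborel_reflect[OF eq]
    by eventually_elim (auto simp: mu_def odd_step_def algebra_simps)
  then have "\<not> integrable lborel (\<lambda>\<xi>. (cmod (\<omega> \<xi>))\<^sup>2)"
    by (rule inverse_square_odd_part_not_square_integrable)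
  with \<open>L2 UNIV \<omega>\<close> show False
    by (simp add: L2_def set_integrable_def)
qed

theorem lemma2p6:
  fixes \<alpha> \<gamma> a b \<eta> :: real
  assumes "0 < \<alpha>" "\<alpha> < 1" "\<gamma> > 0" "a > 0" "b \<noteq> 0" "\<eta> = 0"
  shows "\<not> invertible_op a \<gamma> \<alpha> (domA \<gamma> \<alpha> \<eta>) (\<lambda>U. st_scale (-1) (opA a b \<alpha> \<eta> U))
         \<and> 0 \<in> spectrumA a b \<gamma> \<alpha> \<eta>"
proof -
  have \<gamma>\<kappa>: "0 < \<gamma> * kappa \<alpha>"
    using assms(1-3) kappa_pos by simp
  have "\<not> invertible_op a \<gamma> \<alpha> (domA \<gamma> \<alpha> 0) (\<lambda>U. st_scale (-1) (opA a b \<alpha> 0 U))"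
  proof
    assume "invertible_op a \<gamma> \<alpha> (domA \<gamma> \<alpha> 0) (\<lambda>U. st_scale (-1) (opA a b \<alpha> 0 U))"
    then obtain U where "domA \<gamma> \<alpha> 0 U"
      "Heq a \<gamma> \<alpha> (st_scale (-1) (opA a b \<alpha> 0 U)) (\<lambda>_. 0, \<lambda>_. 0, \<lambda>_. 0, \<lambda>_. 0, odd_step)"
      using inH_odd_step unfolding invertible_op_def by blast
    then show False
      using minus_opA_not_Heq_odd_step[OF _ \<gamma>\<kappa>] \<open>a > 0\<close> by (cases U) force
  qed
  then show ?thesis
    using \<open>\<eta> = 0\<close> zero_in_spectrumA_iff by simp
qed

end
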